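(* Let $W_1,W_2,\dots$ be graphons on $\Omega$ with $\|W_n-W\|_\square\to0$ for a graphon $W$. For each $n$ let $f_n:\Omega\to\{0,\tfrac12,1\}$ be a half-integral fractional vertex cover of $W_n$. Then there exists a half-integral fractional vertex cover $f:\Omega\to\{0,\tfrac12,1\}$ of $W$ such that (a) $\mu(f^{-1}(0))\ge\liminf_{n\to\infty}\mu(f_n^{-1}(0))$, and (b) $\|f\|_1\le\liminf_{n\to\infty}\|f_n\|_1$.
   Context: $(\Omega,\mu)$ is an atomless standard probability space; a graphon is a symmetric measurable $W:\Omega^2\to[0,1]$. The cut norm is $\|U\|_\square=\sup_{S,T\subseteq\Omega}\left|\int_{S\times T}U\,d\mu^2\right|$ over measurable $S,T$. A fractional vertex cover of a graphon $W$ is a measurable $f:\Omega\to[0,1]$ such that for $\mu^2$-almost every $(x,y)$ with $W(x,y)>0$ we have $f(x)+f(y)\ge1$; it is half-integral if its values lie in $\{0,\tfrac12,1\}$. $\|f\|_1=\int_\Omega|f|\,d\mu$. *)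

theory Defs
  imports "HOL-Probability.Probability"
begin

definition atomless_measure :: "'a measure \<Rightarrow> bool" where
  "atomless_measure M \<longleftrightarrow>
     (\<forall>A\<in>sets M. 0 < emeasure M A \<longrightarrow>
        (\<exists>B\<in>sets M. B \<subseteq> A \<and> 0 < emeasure M B \<and> emeasure M B < emeasure M A))"

definition atomless_standard_prob_space :: "'a::polish_space measure \<Rightarrow> bool" where
  "atomless_standard_prob_space M \<longleftrightarrow>
     prob_space M \<and> sets M = sets borel \<and> atomless_measure M"

definition graphon :: "'a measure \<Rightarrow> ('a \<Rightarrow> 'a \<Rightarrow> real) \<Rightarrow> bool" where
  "graphon M W \<longleftrightarrow>
     (\<lambda>(x, y). W x y) \<in> borel_measurable (M \<Otimes>\<^sub>M M) \<and>
     (\<forall>x y. W x y = W y x) \<and> (\<forall>x y. 0 \<le> W x y \<and> W x y \<le> 1)"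

definition cut_norm :: "'a measure \<Rightarrow> ('a \<Rightarrow> 'a \<Rightarrow> real) \<Rightarrow> real" where
  "cut_norm M U =
     (SUP ST \<in> sets M \<times> sets M.
        \<bar>LINT p : fst ST \<times> snd ST | M \<Otimes>\<^sub>M M. U (fst p) (snd p)\<bar>)"

definition fractional_vertex_cover :: "'a measure \<Rightarrow> ('a \<Rightarrow> 'a \<Rightarrow> real) \<Rightarrow> ('a \<Rightarrow> real) \<Rightarrow> bool" where
  "fractional_vertex_cover M W f \<longleftrightarrow>
     f \<in> borel_measurable M \<and> (\<forall>x\<in>space M. 0 \<le> f x \<and> f x \<le> 1) \<and>
     (AE p in M \<Otimes>\<^sub>M M. W (fst p) (snd p) > 0 \<longrightarrow> f (fst p) + f (snd p) \<ge> 1)"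

definition half_integral :: "'a measure \<Rightarrow> ('a \<Rightarrow> real) \<Rightarrow> bool" where
  "half_integral M f \<longleftrightarrow> (\<forall>x\<in>space M. f x \<in> {0, 1/2, 1})"

definition L1_norm :: "'a measure \<Rightarrow> ('a \<Rightarrow> real) \<Rightarrow> real" where
  "L1_norm M f = (\<integral>x. \<bar>f x\<bar> \<partial>M)"

end

theory Submission
  imports Defs "HOL-Library.Diagonal_Subsequence"
begin

text \<open>Write \<open>Z\<^sub>n = f\<^sub>n\<^sup>-\<^sup>1(0)\<close> and \<open>K\<^sub>n = f\<^sub>n\<^sup>-\<^sup>1{0, 1/2}\<close>.  Pass to a subsequence along which
  \<open>\<parallel>f\<^sub>n\<parallel>\<^sub>1\<close> tends to its \<open>liminf\<close> and, by a diagonal argument over a countable generator of the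
  Borel sets, the indicators of \<open>Z\<^sub>n\<close> and \<open>K\<^sub>n\<close> converge weakly to densities \<open>p, q : \<Omega> \<rightarrow> [0, 1]\<close>.
  Since \<open>f\<^sub>n(x) + f\<^sub>n(y) < 1\<close> on \<open>Z\<^sub>n \<times> K\<^sub>n\<close>, \<open>Z\<^sub>n \<times> Z\<^sub>n\<close> and \<open>K\<^sub>n \<times> Z\<^sub>n\<close>, the graphon \<open>W\<^sub>n\<close>
  vanishes there; convergence in cut norm transfers this to \<open>W\<close>: the functions \<open>p \<otimes> q\<close>,
  \<open>p \<otimes> p\<close> and \<open>q \<otimes> p\<close> annihilate \<open>W\<close> almost everywhere.  Hence \<open>f = 0\<close> on \<open>{p > 0}\<close>,
  \<open>f = 1/2\<close> on \<open>{p = 0 < q}\<close> and \<open>f = 1\<close> elsewhere is a half-integral fractional vertex cover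
  of \<open>W\<close>, with \<open>\<mu>(f\<^sup>-\<^sup>1(0)) \<ge> \<integral> p = lim \<mu>(Z\<^sub>n)\<close> and
  \<open>\<parallel>f\<parallel>\<^sub>1 \<le> 1 - \<integral> p / 2 - \<integral> q / 2 = lim \<parallel>f\<^sub>n\<parallel>\<^sub>1\<close>.\<close>

lemma LIMSEQ_uniform_approximation:
  fixes x :: "nat \<Rightarrow> real"
  assumes approx: "\<And>m. (\<lambda>n. a m n) \<longlonglongrightarrow> b m"
    and err_x: "\<And>m n. \<bar>x n - a m n\<bar> \<le> e m" and err_y: "\<And>m. \<bar>y - b m\<bar> \<le> e m"
    and e: "e \<longlonglongrightarrow> 0"
  shows "x \<longlonglongrightarrow> y"
proof (rule LIMSEQ_I)
  fix r :: real assume "0 < r"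
  then obtain m where m: "e m < r / 3"
    using order_tendstoD(2)[OF e, of "r / 3"] by (auto simp: eventually_sequentially)
  obtain N where N: "\<And>n. n \<ge> N \<Longrightarrow> \<bar>a m n - b m\<bar> < r / 3"
    using LIMSEQ_D[OF approx[of m], of "r / 3"] \<open>0 < r\<close> by auto
  have "norm (x n - y) < r" if "n \<ge> N" for n
    using N[OF that] err_x[where m=m and n=n] err_y[of m] m unfolding real_norm_def by linarith
  then show "\<exists>N. \<forall>n\<ge>N. norm (x n - y) < r" by blast
qed

lemma liminf_ereal_le_of_subseq_tendsto:
  fixes x :: "nat \<Rightarrow> real"
  assumes "strict_mono r" "(\<lambda>n. x (r n)) \<longlonglongrightarrow> l"
  shows "liminf (\<lambda>n. ereal (x n)) \<le> ereal l"
proof -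
  have "liminf (\<lambda>n. ereal (x n)) \<le> liminf ((\<lambda>n. ereal (x n)) \<circ> r)"
    by (rule liminf_subseq_mono[OF assms(1)])
  also have "\<dots> = ereal l"
    using assms(2) by (intro lim_imp_Liminf) (simp_all add: o_def)
  finally show ?thesis .
qed

lemma liminf_ereal_eq_of_subseq_tendsto:
  fixes x :: "nat \<Rightarrow> real"
  assumes \<sigma>: "(\<lambda>n. ereal (x (\<sigma> n))) \<longlonglongrightarrow> liminf (\<lambda>n. ereal (x n))"
    and r: "strict_mono r" and l: "(\<lambda>n. x (\<sigma> (r n))) \<longlonglongrightarrow> l"
  shows "liminf (\<lambda>n. ereal (x n)) = ereal l"
proof (rule LIMSEQ_unique)
  show "(\<lambda>n. ereal (x (\<sigma> (r n)))) \<longlonglongrightarrow> liminf (\<lambda>n. ereal (x n))"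
    using LIMSEQ_subseq_LIMSEQ[OF \<sigma> r] by (simp add: o_def)
  show "(\<lambda>n. ereal (x (\<sigma> (r n)))) \<longlonglongrightarrow> ereal l" using l by (rule tendsto_ereal)
qed

lemma bounded_seqs_common_convergent_subseq:
  fixes X :: "nat \<Rightarrow> nat \<Rightarrow> real"
  assumes bounded: "\<And>k. bounded (range (X k))"
  obtains r where "strict_mono r" "\<And>k. convergent (\<lambda>n. X k (r n))"
proof -
  define P where "P k s \<longleftrightarrow> convergent (\<lambda>n. X k (s n))" for k and s :: "nat \<Rightarrow> nat"
  interpret subseqs P
  proof
    fix k and s :: "nat \<Rightarrow> nat"
    have "bounded (range (\<lambda>n. X k (s n)))"
      using bounded[of k] by (rule bounded_subset) auto
    from bounded_imp_convergent_subsequence[OF this]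
    show "\<exists>r'. strict_mono r' \<and> P k (s \<circ> r')" by (auto simp: P_def convergent_def o_def)
  qed
  have "P k (diagseq \<circ> (+) (Suc k))" for k
  proof (rule diagseq_holds)
    fix r s :: "nat \<Rightarrow> nat" and n assume "strict_mono r" "P n s"
    then show "P n (s \<circ> r)"
      using convergent_subseq_convergent[of "\<lambda>m. X n (s m)" r] by (simp add: P_def o_def)
  qed
  then have "convergent (\<lambda>n. X k (diagseq (n + Suc k)))" for k
    unfolding P_def o_def by (subst add.commute)
  then have "convergent (\<lambda>n. X k (diagseq n))" for k
    using convergent_ignore_initial_segment[of "\<lambda>n. X k (diagseq n)" "Suc k"] by blast
  then show ?thesis using that subseq_diagseq by blast
qed

lemma abs_sub_floor_mult_divide_le:
  fixes t k :: real
  assumes "0 < k"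
  shows "\<bar>t - of_int \<lfloor>k * t\<rfloor> / k\<bar> \<le> 1 / k"
proof -
  have "0 \<le> k * t - of_int \<lfloor>k * t\<rfloor>" "k * t - of_int \<lfloor>k * t\<rfloor> \<le> 1"
    by linarith+
  moreover have "t - of_int \<lfloor>k * t\<rfloor> / k = (k * t - of_int \<lfloor>k * t\<rfloor>) / k"
    using assms by (simp add: field_simps)
  ultimately show ?thesis
    using assms divide_right_mono[of _ 1 k] by simp
qed

lemma (in finite_measure) integrable_bounded_real:
  fixes f :: "'a \<Rightarrow> real"
  assumes "f \<in> borel_measurable M" "\<And>x. x \<in> space M \<Longrightarrow> \<bar>f x\<bar> \<le> B"
  shows "integrable M f"
  using assms by (intro integrable_const_bound[where B=B]) auto

lemma (in finite_measure) abs_integral_le_uniform: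
  fixes f :: "'a \<Rightarrow> real"
  assumes "integrable M f" "\<And>x. x \<in> space M \<Longrightarrow> \<bar>f x\<bar> \<le> e"
  shows "\<bar>\<integral>x. f x \<partial>M\<bar> \<le> e * measure M (space M)"
proof -
  have "\<bar>\<integral>x. f x \<partial>M\<bar> \<le> (\<integral>x. \<bar>f x\<bar> \<partial>M)" by (rule integral_abs_bound)
  also have "\<dots> \<le> (\<integral>x. e \<partial>M)" using assms by (intro integral_mono) auto
  finally show ?thesis by (simp add: mult.commute)
qed

lemma (in finite_measure) abs_integral_weighted_diff_le:
  fixes w u v :: "'a \<Rightarrow> real"
  assumes [measurable]: "w \<in> borel_measurable M" "u \<in> borel_measurable M" "v \<in> borel_measurable M"
    and w: "\<And>x. \<bar>w x\<bar> \<le> 1"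
    and u: "\<And>x. x \<in> space M \<Longrightarrow> \<bar>u x\<bar> \<le> B" and v: "\<And>x. x \<in> space M \<Longrightarrow> \<bar>v x\<bar> \<le> B"
    and uv: "\<And>x. x \<in> space M \<Longrightarrow> \<bar>u x - v x\<bar> \<le> e"
  shows "\<bar>(\<integral>x. w x * u x \<partial>M) - (\<integral>x. w x * v x \<partial>M)\<bar> \<le> e * measure M (space M)"
proof -
  have weight: "\<bar>w x * t\<bar> \<le> \<bar>t\<bar>" for x t
    using mult_right_mono[OF w[of x] abs_ge_zero[of t]] by (simp add: abs_mult)
  have int_u: "integrable M (\<lambda>x. w x * u x)"
    using order_trans[OF weight u] by (intro integrable_bounded_real) simp_all
  have int_v: "integrable M (\<lambda>x. w x * v x)"
    using order_trans[OF weight v] by (intro integrable_bounded_real) simp_all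
  from int_u int_v have "(\<integral>x. w x * u x \<partial>M) - (\<integral>x. w x * v x \<partial>M) = (\<integral>x. w x * (u x - v x) \<partial>M)"
    by (simp add: right_diff_distrib)
  also have "\<bar>\<dots>\<bar> \<le> e * measure M (space M)"
  proof (rule abs_integral_le_uniform)
    show "integrable M (\<lambda>x. w x * (u x - v x))"
      using int_u int_v by (simp add: right_diff_distrib)
    show "\<bar>w x * (u x - v x)\<bar> \<le> e" if "x \<in> space M" for x
      using order_trans[OF weight uv[OF that]] .
  qed
  finally show ?thesis .
qed

lemma abs_integral_indicator_diff_le:
  fixes u v :: "'a \<Rightarrow> real"
  assumes A: "A \<in> sets M" and u: "integrable M u" and v: "integrable M v"
  shows "\<bar>(\<integral>x. indicator A x * u x \<partial>M) - (\<integral>x. indicator A x * v x \<partial>M)\<bar> \<le> (\<integral>x. \<bar>u x - v x\<bar> \<partial>M)"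
proof -
  have "integrable M (\<lambda>x. indicator A x * f x)" if "integrable M f" for f :: "'a \<Rightarrow> real"
    using integrable_real_mult_indicator[OF A that] by (simp add: mult.commute)
  then have ints: "integrable M (\<lambda>x. indicator A x * u x)" "integrable M (\<lambda>x. indicator A x * v x)"
    using u v by blast+
  then have "(\<integral>x. indicator A x * u x \<partial>M) - (\<integral>x. indicator A x * v x \<partial>M)
      = (\<integral>x. indicator A x * (u x - v x) \<partial>M)"
    by (simp add: right_diff_distrib)
  also have "\<bar>\<dots>\<bar> \<le> (\<integral>x. \<bar>indicator A x * (u x - v x)\<bar> \<partial>M)"
    by (rule integral_abs_bound)
  also have "\<dots> \<le> (\<integral>x. \<bar>u x - v x\<bar> \<partial>M)"
  proof (rule integral_mono)
    show "integrable M (\<lambda>x. \<bar>indicator A x * (u x - v x)\<bar>)"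
      using ints by (simp add: right_diff_distrib)
    show "integrable M (\<lambda>x. \<bar>u x - v x\<bar>)" using u v by simp
  qed (simp add: indicator_def)
  finally show ?thesis .
qed

lemma (in finite_measure) integral_pair_measure_product:
  fixes a b :: "'a \<Rightarrow> real" and W :: "'a \<Rightarrow> 'a \<Rightarrow> real"
  assumes [measurable]: "a \<in> borel_measurable M" "b \<in> borel_measurable M"
      "(\<lambda>z. W (fst z) (snd z)) \<in> borel_measurable (M \<Otimes>\<^sub>M M)"
    and bounds: "\<And>x. \<bar>a x\<bar> \<le> 1" "\<And>x. \<bar>b x\<bar> \<le> 1" "\<And>x y. \<bar>W x y\<bar> \<le> 1"
  shows "(\<integral>z. a (fst z) * b (snd z) * W (fst z) (snd z) \<partial>(M \<Otimes>\<^sub>M M))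
       = (\<integral>x. a x * (\<integral>y. b y * W x y \<partial>M) \<partial>M)"
proof -
  interpret pair_sigma_finite M M ..
  interpret MM: finite_measure "M \<Otimes>\<^sub>M M"
    by (intro finite_measure_pair_measure finite_measure_axioms)
  have "\<bar>a x * b y * W x y\<bar> \<le> 1" for x y
    using bounds by (simp add: abs_mult mult_le_one)
  then have "integrable (M \<Otimes>\<^sub>M M) (\<lambda>(x, y). a x * b y * W x y)"
    by (intro MM.integrable_bounded_real[where B=1]) auto
  from integral_fst[OF this] show ?thesis
    by (simp add: split_beta' mult.assoc)
qed

lemma simple_function_floor_mult_divide:
  fixes h :: "'a \<Rightarrow> real"
  assumes h[measurable]: "h \<in> borel_measurable M"
    and h_bound: "\<And>x. x \<in> space M \<Longrightarrow> \<bar>h x\<bar> \<le> B" and k: "0 < k"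
  shows "simple_function M (\<lambda>x. of_int \<lfloor>k * h x\<rfloor> / k)"
proof (rule simple_function_borel_measurable)
  show "(\<lambda>x. of_int \<lfloor>k * h x\<rfloor> / k) \<in> borel_measurable M" by measurable
  have "\<lfloor>k * h x\<rfloor> \<in> {\<lfloor>- (k * B)\<rfloor>..\<lfloor>k * B\<rfloor>}" if "x \<in> space M" for x
  proof -
    have "\<bar>k * h x\<bar> \<le> k * B"
      using h_bound[OF that] k by (simp add: abs_mult mult_left_mono)
    then show ?thesis by (auto simp: abs_le_iff intro!: floor_mono)
  qed
  then have "(\<lambda>x. of_int \<lfloor>k * h x\<rfloor> / k) ` space M \<subseteq> (\<lambda>j. of_int j / k) ` {\<lfloor>- (k * B)\<rfloor>..\<lfloor>k * B\<rfloor>}"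
    by (intro image_subsetI image_eqI[OF refl])
  then show "finite ((\<lambda>x. of_int \<lfloor>k * h x\<rfloor> / k) ` space M)" by (rule finite_subset) simp
qed

lemma (in finite_measure) integral_mult_simple_function:
  fixes g w :: "'a \<Rightarrow> real"
  assumes g: "simple_function M g"
    and w[measurable]: "w \<in> borel_measurable M" and w_bound: "\<And>x. \<bar>w x\<bar> \<le> 1"
  shows "(\<integral>x. w x * g x \<partial>M)
    = (\<Sum>y\<in>g ` space M. y * (\<integral>x. indicator (g -` {y} \<inter> space M) x * w x \<partial>M))"
proof -
  have [measurable]: "g -` {y} \<inter> space M \<in> sets M" for y using g by (rule simple_functionD)
  have g_eq: "g x = (\<Sum>y\<in>g ` space M. y * indicator (g -` {y} \<inter> space M) x)" if "x \<in> space M" for x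
  proof -
    have "(\<Sum>y\<in>g ` space M. y * indicator (g -` {y} \<inter> space M) x)
        = (\<Sum>y\<in>g ` space M. if y = g x then y else 0)"
      using that by (intro sum.cong) (auto simp: indicator_def)
    then show ?thesis using that simple_functionD(1)[OF g] by simp
  qed
  have "integrable M (\<lambda>x. indicator (g -` {y} \<inter> space M) x * w x)" for y
    by (rule integrable_bounded_real[where B=1]) (measurable, use w_bound in \<open>simp add: indicator_def\<close>)
  moreover have "(\<integral>x. w x * g x \<partial>M)
      = (\<integral>x. (\<Sum>y\<in>g ` space M. y * (indicator (g -` {y} \<inter> space M) x * w x)) \<partial>M)"
  proof (intro Bochner_Integration.integral_cong refl)
    fix x assume "x \<in> space M"
    then show "w x * g x = (\<Sum>y\<in>g ` space M. y * (indicator (g -` {y} \<inter> space M) x * w x))"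
      by (subst g_eq) (simp_all add: sum_distrib_left mult_ac)
  qed
  ultimately show ?thesis by simp
qed

section \<open>Limits of the masses \<open>\<mu> (R\<^sub>n \<inter> A)\<close>\<close>

lemma (in finite_measure) measure_Int_UN_tendsto_suminf:
  assumes A: "range A \<subseteq> sets M" "disjoint_family A" and R: "\<And>n. R n \<in> sets M"
    and lim: "\<And>k. (\<lambda>n. measure M (R n \<inter> A k)) \<longlonglongrightarrow> b k"
  shows "(\<lambda>n. measure M (R n \<inter> (\<Union>k. A k))) \<longlonglongrightarrow> suminf b"
proof -
  have split: "measure M (R n \<inter> (\<Union>k. A k)) = (\<Sum>k. measure M (R n \<inter> A k))" for n
  proof -
    have "(\<lambda>k. measure M (R n \<inter> A k)) sums measure M (\<Union>k. R n \<inter> A k)"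
      using A R by (intro finite_measure_UNION) (auto simp: disjoint_family_on_def)
    then show ?thesis by (simp add: sums_iff)
  qed
  have "summable (\<lambda>k. measure M (A k))"
    using finite_measure_UNION[OF A] by (simp add: sums_iff)
  moreover have "norm (measure M (R n \<inter> A k)) \<le> measure M (A k)" for n k
    using A by (auto intro!: finite_measure_mono)
  ultimately have "(\<lambda>n. \<Sum>k. measure M (R n \<inter> A k)) \<longlonglongrightarrow> suminf b"
    by (intro tannerys_theorem[THEN conjunct2, THEN conjunct2] lim always_eventually) auto
  then show ?thesis by (simp add: split)
qed

text \<open>By Dynkin-system induction; Tannery's theorem handles countable disjoint unions.\<close>
lemma (in finite_measure) convergent_measure_Int_sigma_sets:
  assumes G: "sets M = sigma_sets (space M) G" "Int_stable G" "G \<subseteq> Pow (space M)" "space M \<in> G"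
    and R: "\<And>n. R n \<in> sets M"
    and conv: "\<And>A. A \<in> G \<Longrightarrow> convergent (\<lambda>n. measure M (R n \<inter> A))"
    and A: "A \<in> sets M"
  shows "convergent (\<lambda>n. measure M (R n \<inter> A))"
proof -
  from A have "A \<in> sigma_sets (space M) G" using G(1) by simp
  with G(2,3) show ?thesis
  proof (induct rule: sigma_sets_induct_disjoint)
    case (basic A) then show ?case by (rule conv)
  next
    case empty then show ?case by (simp add: convergent_const)
  next
    case (compl A)
    have "measure M (R n \<inter> (space M - A)) = measure M (R n \<inter> space M) - measure M (R n \<inter> A)" for n
    proof -
      have "R n \<inter> (space M - A) = R n - (R n \<inter> A)" using sets.sets_into_space[OF R] by blast
      moreover have "A \<in> sets M" using compl(1) G(1) by simp
      ultimately show ?thesis using R[of n] Int_absorb2[OF sets.sets_into_space[OF R]]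
        by (simp add: finite_measure_Diff)
    qed
    then show ?case using conv[OF G(4)] compl(2) by (simp add: convergent_diff)
  next
    case (union A)
    have "range A \<subseteq> sets M" using union(2) G(1) by simp
    moreover have "(\<lambda>n. measure M (R n \<inter> A k)) \<longlonglongrightarrow> lim (\<lambda>n. measure M (R n \<inter> A k))" for k
      using union(3) by (simp add: convergent_LIMSEQ_iff)
    ultimately have "(\<lambda>n. measure M (R n \<inter> (\<Union>k. A k)))
        \<longlonglongrightarrow> (\<Sum>k. lim (\<lambda>n. measure M (R n \<inter> A k)))"
      by (intro measure_Int_UN_tendsto_suminf union(1) R)
    then show ?case by (auto simp: convergent_def)
  qed
qed

lemma countable_Int_stable_generator:
  fixes M :: "'a::second_countable_topology measure"
  assumes sets_M: "sets M = sets borel"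
  obtains G where "countable G" "Int_stable G" "space M \<in> G" "G \<subseteq> Pow (space M)"
    "sets M = sigma_sets (space M) G"
proof -
  have space_M: "space M = UNIV" using sets_eq_imp_space_eq[OF sets_M] by simp
  obtain B :: "'a set set" where B: "countable B" "topological_basis B"
    using ex_countable_basis by blast
  define G where "G = Inter ` {F. finite F \<and> F \<subseteq> B}"
  have "countable G"
    unfolding G_def using B(1) by (intro countable_image countable_Collect_finite_subset)
  moreover have "Int_stable G"
    unfolding Int_stable_def G_def
  proof clarify
    fix F F' assume "finite F" "F \<subseteq> B" "finite F'" "F' \<subseteq> B"
    then show "\<Inter>F \<inter> \<Inter>F' \<in> Inter ` {F. finite F \<and> F \<subseteq> B}"
      by (intro image_eqI[where x="F \<union> F'"]) auto
  qed
  moreover have "UNIV \<in> G"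
    unfolding G_def by (auto intro!: image_eqI[where x="{}"])
  moreover have "sets borel = sigma_sets UNIV G"
  proof (rule antisym)
    have "B \<subseteq> G" unfolding G_def by (auto intro!: image_eqI[where x="{_}"])
    moreover have "sets borel = sigma_sets UNIV B"
      by (simp add: borel_eq_countable_basis[OF B])
    ultimately show "sets borel \<subseteq> sigma_sets UNIV G"
      by (simp add: sigma_sets_mono')
    have "G \<subseteq> sets borel"
      unfolding G_def using topological_basis_open[OF B(2)] by (auto intro!: borel_open open_Inter)
    then show "sigma_sets UNIV G \<subseteq> sets borel"
      using sets.sigma_sets_subset[of G borel] by simp
  qed
  ultimately show thesis using sets_M space_M by (intro that) auto
qed

lemma (in finite_measure) countably_additive_lim_measure_Int:
  assumes R: "\<And>n. R n \<in> sets M"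
    and conv: "\<And>A. A \<in> sets M \<Longrightarrow> convergent (\<lambda>n. measure M (R n \<inter> A))"
  shows "countably_additive (sets M) (\<lambda>A. ennreal (lim (\<lambda>n. measure M (R n \<inter> A))))"
proof (unfold countably_additive_def, intro allI impI)
  let ?L = "\<lambda>B. lim (\<lambda>n. measure M (R n \<inter> B))"
  have lim: "(\<lambda>n. measure M (R n \<inter> B)) \<longlonglongrightarrow> ?L B" if "B \<in> sets M" for B
    using conv[OF that] by (simp add: convergent_LIMSEQ_iff)
  fix A :: "nat \<Rightarrow> 'a set"
  assume A: "range A \<subseteq> sets M" "disjoint_family A" "\<Union>(range A) \<in> sets M"
  have A_sets: "A k \<in> sets M" for k using A(1) by auto
  have "(\<lambda>n. measure M (R n \<inter> (\<Union>k. A k))) \<longlonglongrightarrow> (\<Sum>k. ?L (A k))"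
    by (rule measure_Int_UN_tendsto_suminf[OF A(1,2) R lim[OF A_sets]])
  then have L_Union: "?L (\<Union>k. A k) = (\<Sum>k. ?L (A k))"
    using lim[OF A(3)] LIMSEQ_unique by blast
  have L_nonneg: "0 \<le> ?L (A k)" for k
    by (rule LIMSEQ_le_const[OF lim[OF A_sets]]) simp
  have L_le: "?L (A k) \<le> measure M (A k)" for k
    by (rule LIMSEQ_le_const2[OF lim[OF A_sets]]) (use A_sets R in \<open>auto intro!: finite_measure_mono\<close>)
  have summable_A: "summable (\<lambda>k. measure M (A k))"
    using finite_measure_UNION[OF A(1,2)] by (simp add: sums_iff)
  have "summable (\<lambda>k. ?L (A k))"
    using L_nonneg L_le by (intro summable_comparison_test[OF _ summable_A]) auto
  then show "(\<Sum>k. ennreal (?L (A k))) = ennreal (?L (\<Union>(range A)))"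
    using L_nonneg by (simp add: L_Union suminf_ennreal2)
qed

lemma (in finite_measure) AE_le_1_if_density_le:
  assumes f[measurable]: "f \<in> borel_measurable M"
    and le: "\<And>A. A \<in> sets M \<Longrightarrow> emeasure (density M f) A \<le> emeasure M A"
  shows "AE x in M. f x \<le> 1"
proof (rule ccontr)
  assume not_AE: "\<not> (AE x in M. f x \<le> 1)"
  define S where "S = {x \<in> space M. 1 < f x}"
  have S[measurable]: "S \<in> sets M" unfolding S_def by measurable
  have "emeasure M S = (\<integral>\<^sup>+x. indicator S x \<partial>M)" by simp
  also have "\<dots> < (\<integral>\<^sup>+x. f x * indicator S x \<partial>M)"
  proof (rule nn_integral_less)
    show "AE x in M. indicator S x \<le> f x * indicator S x"
      by (rule AE_I2) (auto simp: S_def indicator_def less_imp_le)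
    show "\<not> (AE x in M. f x * indicator S x \<le> indicator S x)"
    proof
      assume "AE x in M. f x * indicator S x \<le> indicator S x"
      then have "AE x in M. f x \<le> 1"
        using AE_space by eventually_elim (auto simp: S_def indicator_def not_less of_bool_def split: if_splits)
      with not_AE show False by simp
    qed
  qed auto
  also have "\<dots> = emeasure (density M f) S" by (simp add: emeasure_density)
  also have "\<dots> \<le> emeasure M S" by (rule le[OF S])
  finally show False by simp
qed

lemma (in finite_measure) bounded_density_of_dominated_measure:
  assumes sets_N: "sets N = sets M" and le: "\<And>A. A \<in> sets M \<Longrightarrow> emeasure N A \<le> emeasure M A"
  obtains p where "p \<in> borel_measurable M" "\<And>x. 0 \<le> p x \<and> p x \<le> 1"
    "\<And>A. A \<in> sets M \<Longrightarrow> emeasure N A = ennreal (\<integral>x. indicator A x * p x \<partial>M)"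
proof -
  have "absolutely_continuous M N"
    unfolding absolutely_continuous_def
  proof
    fix A assume "A \<in> null_sets M"
    then show "A \<in> null_sets N" using le[of A] sets_N by (simp add: null_sets_def)
  qed
  then obtain f where f[measurable]: "f \<in> borel_measurable M" and density_f: "density M f = N"
    using Radon_Nikodym[OF _ sets_N] by blast
  have "AE x in M. f x \<le> 1"
    using le by (intro AE_le_1_if_density_le f) (simp add: density_f)
  define p where "p x = min 1 (enn2real (f x))" for x
  have f_eq: "AE x in M. f x = ennreal (p x)"
    using \<open>AE x in M. f x \<le> 1\<close>
  proof eventually_elim
    case (elim x)
    then have "f x \<noteq> \<top>" "enn2real (f x) \<le> 1" by (auto simp: top_unique enn2real_leI)
    then show ?case by (simp add: p_def min_absorb2 less_top)
  qed
  have p[measurable]: "p \<in> borel_measurable M" unfolding p_def by measurable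
  have p_bounds: "0 \<le> p x \<and> p x \<le> 1" for x by (simp add: p_def)
  have "emeasure N A = ennreal (\<integral>x. indicator A x * p x \<partial>M)" if A[measurable]: "A \<in> sets M" for A
  proof -
    have "emeasure N A = (\<integral>\<^sup>+x. f x * indicator A x \<partial>M)"
      by (simp add: density_f[symmetric] emeasure_density)
    also have "\<dots> = (\<integral>\<^sup>+x. ennreal (indicator A x * p x) \<partial>M)"
      using f_eq by (intro nn_integral_cong_AE) (auto simp: indicator_def)
    also have "\<dots> = ennreal (\<integral>x. indicator A x * p x \<partial>M)"
      using p_bounds
      by (intro nn_integral_eq_integral integrable_bounded_real[where B=1]) (auto simp: indicator_def)
    finally show ?thesis .
  qed
  with p p_bounds show thesis by (rule that)
qed

section \<open>Weak limits of indicator functions\<close>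

text \<open>Weak-* convergence in \<open>L\<^sup>\<infinity>(\<mu>)\<close> of the indicators of \<open>R\<^sub>n\<close> to \<open>p\<close>, tested on indicators.\<close>
definition weak_limit_of_indicators :: "'a measure \<Rightarrow> (nat \<Rightarrow> 'a set) \<Rightarrow> ('a \<Rightarrow> real) \<Rightarrow> bool" where
  "weak_limit_of_indicators M R p \<longleftrightarrow>
     p \<in> borel_measurable M \<and> (\<forall>x. 0 \<le> p x \<and> p x \<le> 1) \<and>
     (\<forall>A\<in>sets M. (\<lambda>n. measure M (R n \<inter> A)) \<longlonglongrightarrow> (\<integral>x. indicator A x * p x \<partial>M))"

lemma weak_limit_of_indicatorsD:
  assumes "weak_limit_of_indicators M R p"
  shows weak_limit_of_indicators_measurable: "p \<in> borel_measurable M"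
    and weak_limit_of_indicators_nonneg: "0 \<le> p x"
    and weak_limit_of_indicators_le_1: "p x \<le> 1"
    and weak_limit_of_indicators_abs_le_1: "\<bar>p x\<bar> \<le> 1"
    and weak_limit_of_indicators_tendsto:
      "A \<in> sets M \<Longrightarrow> (\<lambda>n. measure M (R n \<inter> A)) \<longlonglongrightarrow> (\<integral>x. indicator A x * p x \<partial>M)"
  using assms unfolding weak_limit_of_indicators_def by auto

lemma weak_limit_of_indicators_subseq:
  assumes "weak_limit_of_indicators M R p" "strict_mono r"
  shows "weak_limit_of_indicators M (R \<circ> r) p"
  using assms LIMSEQ_subseq_LIMSEQ[OF _ assms(2)] unfolding weak_limit_of_indicators_def o_def by blast

lemma weak_limit_of_indicators_measure_tendsto:
  assumes p: "weak_limit_of_indicators M R p" and R: "\<And>n. R n \<subseteq> space M"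
  shows "(\<lambda>n. measure M (R n)) \<longlonglongrightarrow> (\<integral>x. p x \<partial>M)"
proof -
  have "(\<lambda>n. measure M (R n \<inter> space M)) \<longlonglongrightarrow> (\<integral>x. indicator (space M) x * p x \<partial>M)"
    by (rule weak_limit_of_indicators_tendsto[OF p sets.top])
  moreover have "(\<integral>x. indicator (space M) x * p x \<partial>M) = (\<integral>x. p x \<partial>M)"
    by (rule Bochner_Integration.integral_cong) auto
  ultimately show ?thesis using R by (simp add: Int_absorb2)
qed

text \<open>The limit set function \<open>A \<mapsto> lim (\<mu> (R n \<inter> A))\<close> is a measure dominated by \<open>\<mu>\<close>;
  its density is the weak limit.\<close>
lemma (in finite_measure) weak_limit_of_indicators_exists:
  assumes R: "\<And>n. R n \<in> sets M"
    and conv: "\<And>A. A \<in> sets M \<Longrightarrow> convergent (\<lambda>n. measure M (R n \<inter> A))"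
  obtains p where "weak_limit_of_indicators M R p"
proof -
  define L where "L A = lim (\<lambda>n. measure M (R n \<inter> A))" for A
  have lim: "(\<lambda>n. measure M (R n \<inter> A)) \<longlonglongrightarrow> L A" if "A \<in> sets M" for A
    using conv[OF that] by (simp add: L_def convergent_LIMSEQ_iff)
  have L_nonneg: "0 \<le> L A" if "A \<in> sets M" for A
    by (rule LIMSEQ_le_const[OF lim[OF that]]) simp
  have L_le: "L A \<le> measure M A" if "A \<in> sets M" for A
    by (rule LIMSEQ_le_const2[OF lim[OF that]]) (use that R in \<open>auto intro!: finite_measure_mono\<close>)
  define N where "N = measure_of (space M) (sets M) (\<lambda>A. ennreal (L A))"
  have sets_N: "sets N = sets M" unfolding N_def by simp
  have emeasure_N: "emeasure N A = ennreal (L A)" if "A \<in> sets M" for A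
    unfolding N_def
    using sets.sigma_algebra_axioms countably_additive_lim_measure_Int[OF R conv] that
    by (intro emeasure_measure_of_sigma) (auto simp: positive_def L_def)
  obtain p where p: "p \<in> borel_measurable M" "\<And>x. 0 \<le> p x \<and> p x \<le> 1"
    and emeasure_N_p: "\<And>A. A \<in> sets M \<Longrightarrow> emeasure N A = ennreal (\<integral>x. indicator A x * p x \<partial>M)"
    using bounded_density_of_dominated_measure[OF sets_N] emeasure_N L_le
    by (metis emeasure_eq_measure ennreal_leI)
  have "(\<integral>x. indicator A x * p x \<partial>M) = L A" if "A \<in> sets M" for A
  proof -
    have "0 \<le> (\<integral>x. indicator A x * p x \<partial>M)"
      using p(2) by (intro integral_nonneg_AE) (simp add: indicator_def)
    then show ?thesis
      using emeasure_N_p[OF that] emeasure_N[OF that] L_nonneg[OF that] by simp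
  qed
  then show thesis
    using lim p by (intro that[of p]) (simp add: weak_limit_of_indicators_def)
qed

lemma (in finite_measure) weak_limit_of_indicators_subseq_exists:
  fixes R :: "nat \<Rightarrow> 'a set"
  assumes G: "countable G" "Int_stable G" "space M \<in> G" "G \<subseteq> Pow (space M)"
      "sets M = sigma_sets (space M) G"
    and R: "\<And>n. R n \<in> sets M"
  obtains r p where "strict_mono r" "weak_limit_of_indicators M (R \<circ> r) p"
proof -
  have G_range: "range (from_nat_into G) = G"
    using G(1,3) by (intro range_from_nat_into) auto
  obtain r where r: "strict_mono r"
    and conv: "\<And>k. convergent (\<lambda>n. measure M (R (r n) \<inter> from_nat_into G k))"
    by (rule bounded_seqs_common_convergent_subseq[of "\<lambda>k n. measure M (R n \<inter> from_nat_into G k)"])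
      (auto simp: bounded_iff intro!: exI[of _ "measure M (space M)"] bounded_measure)
  have "convergent (\<lambda>n. measure M (R (r n) \<inter> A))" if "A \<in> sets M" for A
  proof (rule convergent_measure_Int_sigma_sets[OF G(5,2,4,3) _ _ that])
    show "R (r n) \<in> sets M" for n by (rule R)
    fix B assume "B \<in> G"
    then show "convergent (\<lambda>n. measure M (R (r n) \<inter> B))"
      using conv G_range by (metis rangeE)
  qed
  then obtain p where "weak_limit_of_indicators M (R \<circ> r) p"
    using weak_limit_of_indicators_exists[of "R \<circ> r"] R by auto
  with r show thesis by (rule that)
qed

lemma (in finite_measure) weak_limits_of_indicators_common_subseq:
  fixes R S :: "nat \<Rightarrow> 'a set"
  assumes G: "countable G" "Int_stable G" "space M \<in> G" "G \<subseteq> Pow (space M)"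
      "sets M = sigma_sets (space M) G"
    and R: "\<And>n. R n \<in> sets M" and S: "\<And>n. S n \<in> sets M"
  obtains r p q where "strict_mono r"
    "weak_limit_of_indicators M (R \<circ> r) p" "weak_limit_of_indicators M (S \<circ> r) q"
proof -
  obtain r p where r: "strict_mono r" and p: "weak_limit_of_indicators M (R \<circ> r) p"
    by (rule weak_limit_of_indicators_subseq_exists[OF G R])
  have "(S \<circ> r) n \<in> sets M" for n using S by simp
  then obtain r' q where r': "strict_mono r'" and q: "weak_limit_of_indicators M (S \<circ> r \<circ> r') q"
    by (rule weak_limit_of_indicators_subseq_exists[OF G])
  show thesis
  proof (rule that[of "r \<circ> r'" p q])
    show "strict_mono (r \<circ> r')" using r r' by (rule strict_mono_o)
    show "weak_limit_of_indicators M (R \<circ> (r \<circ> r')) p"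
      using weak_limit_of_indicators_subseq[OF p r'] by (simp add: o_assoc)
    show "weak_limit_of_indicators M (S \<circ> (r \<circ> r')) q" using q by (simp add: o_assoc)
  qed
qed

lemma (in finite_measure) weak_limit_integral_simple_function:
  assumes p: "weak_limit_of_indicators M R p" and R: "\<And>n. R n \<in> sets M"
    and g: "simple_function M g"
  shows "(\<lambda>n. \<integral>x. indicator (R n) x * g x \<partial>M) \<longlonglongrightarrow> (\<integral>x. p x * g x \<partial>M)"
proof -
  define E where "E y = g -` {y} \<inter> space M" for y
  have [measurable]: "E y \<in> sets M" for y unfolding E_def using g by (rule simple_functionD)
  have "(\<integral>x. indicator (R n) x * g x \<partial>M) = (\<Sum>y\<in>g ` space M. y * measure M (R n \<inter> E y))" for n
  proof -
    have "(\<integral>x. indicator (R n) x * g x \<partial>M)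
        = (\<Sum>y\<in>g ` space M. y * (\<integral>x. indicator (E y) x * indicator (R n) x \<partial>M))"
      unfolding E_def using R[of n] by (intro integral_mult_simple_function g) auto
    also have "\<dots> = (\<Sum>y\<in>g ` space M. y * measure M (R n \<inter> E y))"
      using R[of n] sets.sets_into_space[OF R[of n]]
      by (simp add: indicator_inter_arith[symmetric] Int_commute Int_absorb2 Int_assoc)
    finally show ?thesis .
  qed
  moreover have "(\<lambda>n. \<Sum>y\<in>g ` space M. y * measure M (R n \<inter> E y))
      \<longlonglongrightarrow> (\<Sum>y\<in>g ` space M. y * (\<integral>x. indicator (E y) x * p x \<partial>M))"
    by (intro tendsto_sum tendsto_mult_left weak_limit_of_indicators_tendsto[OF p]) simp
  moreover have "(\<Sum>y\<in>g ` space M. y * (\<integral>x. indicator (E y) x * p x \<partial>M)) = (\<integral>x. p x * g x \<partial>M)"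
    unfolding E_def
    by (intro integral_mult_simple_function[symmetric] g weak_limit_of_indicatorsD[OF p])
  ultimately show ?thesis by simp
qed

text \<open>Approximate \<open>h\<close> uniformly by the simple functions \<open>\<lfloor>m h\<rfloor> / m\<close>.\<close>
lemma (in finite_measure) weak_limit_integral_bounded:
  fixes h :: "'a \<Rightarrow> real"
  assumes p: "weak_limit_of_indicators M R p" and R: "\<And>n. R n \<in> sets M"
    and h[measurable]: "h \<in> borel_measurable M" and h_bound: "\<And>x. x \<in> space M \<Longrightarrow> \<bar>h x\<bar> \<le> B"
  shows "(\<lambda>n. \<integral>x. indicator (R n) x * h x \<partial>M) \<longlonglongrightarrow> (\<integral>x. p x * h x \<partial>M)"
proof -
  define s where "s m x = of_int \<lfloor>real (Suc m) * h x\<rfloor> / real (Suc m)" for m x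
  have s[measurable]: "s m \<in> borel_measurable M" for m unfolding s_def by measurable
  have Suc_pos: "0 < real (Suc m)" for m by simp
  have s_err: "\<bar>h x - s m x\<bar> \<le> 1 / real (Suc m)" for m x
    unfolding s_def by (rule abs_sub_floor_mult_divide_le[OF Suc_pos])
  have s_bound: "\<bar>s m x\<bar> \<le> B + 1" and h_bound': "\<bar>h x\<bar> \<le> B + 1" if "x \<in> space M" for m x
  proof -
    have "1 / real (Suc m) \<le> 1" by simp
    then show "\<bar>s m x\<bar> \<le> B + 1" "\<bar>h x\<bar> \<le> B + 1"
      using s_err[of x m] h_bound[OF that] unfolding abs_le_iff by linarith+
  qed
  have "simple_function M (s m)" for m
    unfolding s_def by (rule simple_function_floor_mult_divide[OF h h_bound Suc_pos])
  then have approx: "(\<lambda>n. \<integral>x. indicator (R n) x * s m x \<partial>M) \<longlonglongrightarrow> (\<integral>x. p x * s m x \<partial>M)" for m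
    by (rule weak_limit_integral_simple_function[OF p R])
  have err: "\<bar>(\<integral>x. w x * h x \<partial>M) - (\<integral>x. w x * s m x \<partial>M)\<bar> \<le> measure M (space M) / real (Suc m)"
    if "w \<in> borel_measurable M" "\<And>x. \<bar>w x\<bar> \<le> 1" for w m
    using abs_integral_weighted_diff_le[OF that(1) h s that(2) h_bound' s_bound s_err] by simp
  show ?thesis
  proof (rule LIMSEQ_uniform_approximation[OF approx])
    show "\<bar>(\<integral>x. indicator (R n) x * h x \<partial>M) - (\<integral>x. indicator (R n) x * s m x \<partial>M)\<bar>
        \<le> measure M (space M) / real (Suc m)" for m n
      using R by (intro err) auto
    show "\<bar>(\<integral>x. p x * h x \<partial>M) - (\<integral>x. p x * s m x \<partial>M)\<bar> \<le> measure M (space M) / real (Suc m)" for m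
      by (intro err weak_limit_of_indicatorsD[OF p])
    show "(\<lambda>m. measure M (space M) / real (Suc m)) \<longlonglongrightarrow> 0"
      using LIMSEQ_Suc[OF lim_const_over_n] by simp
  qed
qed

lemma (in finite_measure) weak_limit_integral_pointwise_limit:
  assumes p: "weak_limit_of_indicators M R p" and R: "\<And>n. R n \<in> sets M"
    and h[measurable]: "\<And>n. h n \<in> borel_measurable M" and g[measurable]: "g \<in> borel_measurable M"
    and h_bound: "\<And>n x. x \<in> space M \<Longrightarrow> \<bar>h n x\<bar> \<le> B"
    and lim: "\<And>x. x \<in> space M \<Longrightarrow> (\<lambda>n. h n x) \<longlonglongrightarrow> g x"
  shows "(\<lambda>n. \<integral>x. indicator (R n) x * h n x \<partial>M) \<longlonglongrightarrow> (\<integral>x. p x * g x \<partial>M)"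
proof -
  have g_bound: "\<bar>g x\<bar> \<le> B" if "x \<in> space M" for x
    using tendsto_rabs[OF lim[OF that]] by (rule LIMSEQ_le_const2) (use h_bound that in auto)
  have diff_bound: "\<bar>h n x - g x\<bar> \<le> 2 * B" if "x \<in> space M" for n x
    using h_bound[OF that, of n] g_bound[OF that] by linarith
  have "(\<lambda>n. \<integral>x. \<bar>h n x - g x\<bar> \<partial>M) \<longlonglongrightarrow> (\<integral>x. 0 \<partial>M)"
  proof (rule integral_dominated_convergence[where w="\<lambda>_. 2 * B"])
    show "AE x in M. (\<lambda>n. \<bar>h n x - g x\<bar>) \<longlonglongrightarrow> 0"
      using lim by (intro AE_I2 tendsto_rabs_zero LIM_zero) auto
    show "AE x in M. norm \<bar>h n x - g x\<bar> \<le> 2 * B" for n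
      using diff_bound by (intro AE_I2) auto
    show "(\<lambda>x. \<bar>h n x - g x\<bar>) \<in> borel_measurable M" for n by measurable
  qed simp_all
  then have dominated: "(\<lambda>n. \<integral>x. \<bar>h n x - g x\<bar> \<partial>M) \<longlonglongrightarrow> 0" by simp
  have norm_bound: "norm ((\<integral>x. indicator (R n) x * h n x \<partial>M) - (\<integral>x. indicator (R n) x * g x \<partial>M))
      \<le> (\<integral>x. \<bar>h n x - g x\<bar> \<partial>M)" for n
    using abs_integral_indicator_diff_le[OF R integrable_bounded_real[OF h h_bound]
        integrable_bounded_real[OF g g_bound]]
    by simp
  have "(\<lambda>n. (\<integral>x. indicator (R n) x * h n x \<partial>M) - (\<integral>x. indicator (R n) x * g x \<partial>M)) \<longlonglongrightarrow> 0"
    by (rule Lim_null_comparison[OF always_eventually[OF allI[OF norm_bound]] dominated])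
  from tendsto_add[OF this weak_limit_integral_bounded[OF p R g g_bound]] show ?thesis by simp
qed

lemma (in finite_measure) weak_limit_integral_Times:
  fixes W :: "'a \<Rightarrow> 'a \<Rightarrow> real"
  assumes p: "weak_limit_of_indicators M P p" and q: "weak_limit_of_indicators M Q q"
    and P[measurable]: "\<And>n. P n \<in> sets M" and Q[measurable]: "\<And>n. Q n \<in> sets M"
    and W[measurable]: "(\<lambda>z. W (fst z) (snd z)) \<in> borel_measurable (M \<Otimes>\<^sub>M M)"
    and W_bound: "\<And>x y. \<bar>W x y\<bar> \<le> 1"
  shows "(\<lambda>n. \<integral>z. indicator (P n \<times> Q n) z * W (fst z) (snd z) \<partial>(M \<Otimes>\<^sub>M M))
      \<longlonglongrightarrow> (\<integral>z. p (fst z) * q (snd z) * W (fst z) (snd z) \<partial>(M \<Otimes>\<^sub>M M))"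
proof -
  note [measurable] = weak_limit_of_indicators_measurable[OF p] weak_limit_of_indicators_measurable[OF q]
  have [measurable]: "(\<lambda>(x, y). W x y) \<in> borel_measurable (M \<Otimes>\<^sub>M M)"
    using W by (simp add: split_beta')
  have W_section[measurable]: "(\<lambda>y. W x y) \<in> borel_measurable M" if "x \<in> space M" for x
    using measurable_Pair2[OF W that] by simp
  define h where "h n x = (\<integral>y. indicator (Q n) y * W x y \<partial>M)" for n x
  define g where "g x = (\<integral>y. q y * W x y \<partial>M)" for x
  have [measurable]: "h n \<in> borel_measurable M" "g \<in> borel_measurable M" for n
    unfolding h_def g_def by measurable
  have "\<bar>h n x\<bar> \<le> measure M (space M)" if "x \<in> space M" for n x
  proof -
    have bound: "\<bar>indicator (Q n) y * W x y\<bar> \<le> 1" for y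
      using W_bound[of x y] by (auto simp: indicator_def)
    have "integrable M (\<lambda>y. indicator (Q n) y * W x y)"
      using that bound by (intro integrable_bounded_real[where B=1]) auto
    then show ?thesis
      using abs_integral_le_uniform[where e=1] bound by (simp add: h_def)
  qed
  moreover have "(\<lambda>n. h n x) \<longlonglongrightarrow> g x" if "x \<in> space M" for x
    unfolding h_def g_def using that W_bound by (intro weak_limit_integral_bounded[OF q Q]) auto
  ultimately have "(\<lambda>n. \<integral>x. indicator (P n) x * h n x \<partial>M) \<longlonglongrightarrow> (\<integral>x. p x * g x \<partial>M)"
    by (intro weak_limit_integral_pointwise_limit[OF p P]) auto
  moreover have "(\<integral>z. indicator (P n \<times> Q n) z * W (fst z) (snd z) \<partial>(M \<Otimes>\<^sub>M M))
      = (\<integral>x. indicator (P n) x * h n x \<partial>M)" for n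
    unfolding h_def indicator_times using W_bound
    by (intro integral_pair_measure_product) (auto simp: indicator_def)
  moreover have "(\<integral>z. p (fst z) * q (snd z) * W (fst z) (snd z) \<partial>(M \<Otimes>\<^sub>M M)) = (\<integral>x. p x * g x \<partial>M)"
    unfolding g_def using W_bound weak_limit_of_indicators_abs_le_1[OF p] weak_limit_of_indicators_abs_le_1[OF q]
    by (intro integral_pair_measure_product) auto
  ultimately show ?thesis by simp
qed

section \<open>Graphons and the cut norm\<close>

lemma graphonD:
  assumes "graphon M W"
  shows graphon_measurable: "(\<lambda>z. W (fst z) (snd z)) \<in> borel_measurable (M \<Otimes>\<^sub>M M)"
    and graphon_nonneg: "0 \<le> W x y" and graphon_le_1: "W x y \<le> 1"
  using assms unfolding graphon_def by (simp_all add: split_beta')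

lemma abs_integral_Times_le_cut_norm:
  fixes U :: "'a \<Rightarrow> 'a \<Rightarrow> real"
  assumes "prob_space M"
    and U[measurable]: "(\<lambda>z. U (fst z) (snd z)) \<in> borel_measurable (M \<Otimes>\<^sub>M M)"
    and U_bound: "\<And>x y. \<bar>U x y\<bar> \<le> B"
    and S: "S \<in> sets M" and T: "T \<in> sets M"
  shows "\<bar>\<integral>z. indicator (S \<times> T) z * U (fst z) (snd z) \<partial>(M \<Otimes>\<^sub>M M)\<bar> \<le> cut_norm M U"
proof -
  interpret MM: prob_space "M \<Otimes>\<^sub>M M" using assms(1) by (intro prob_space_pair)
  have "\<bar>\<integral>z. indicator A z * U (fst z) (snd z) \<partial>(M \<Otimes>\<^sub>M M)\<bar> \<le> B" if A: "A \<in> sets (M \<Otimes>\<^sub>M M)" for A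
  proof -
    have bound: "\<bar>indicator A z * U (fst z) (snd z)\<bar> \<le> B" for z
      using U_bound[of "fst z" "snd z"] order_trans[OF abs_ge_zero U_bound]
      by (auto simp: indicator_def)
    have "\<bar>\<integral>z. indicator A z * U (fst z) (snd z) \<partial>(M \<Otimes>\<^sub>M M)\<bar>
        \<le> B * measure (M \<Otimes>\<^sub>M M) (space (M \<Otimes>\<^sub>M M))"
      by (rule MM.abs_integral_le_uniform[OF MM.integrable_bounded_real[OF _ bound]])
        (use A bound in simp_all)
    then show ?thesis by (simp add: MM.prob_space)
  qed
  then show ?thesis
    unfolding cut_norm_def set_lebesgue_integral_def real_scaleR_def
    by (intro cSUP_upper2[where x="(S, T)"] bdd_aboveI[where M=B]) (use S T in auto)
qed

lemma abs_integral_Times_diff_le_cut_norm: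
  assumes "prob_space M" and V: "graphon M V" and W: "graphon M W"
    and S: "S \<in> sets M" and T: "T \<in> sets M"
  shows "\<bar>(\<integral>z. indicator (S \<times> T) z * V (fst z) (snd z) \<partial>(M \<Otimes>\<^sub>M M))
           - (\<integral>z. indicator (S \<times> T) z * W (fst z) (snd z) \<partial>(M \<Otimes>\<^sub>M M))\<bar>
         \<le> cut_norm M (\<lambda>x y. V x y - W x y)"
proof -
  interpret MM: prob_space "M \<Otimes>\<^sub>M M" using assms(1) by (intro prob_space_pair)
  note [measurable] = graphon_measurable[OF V] graphon_measurable[OF W]
  have "integrable (M \<Otimes>\<^sub>M M) (\<lambda>z. indicator (S \<times> T) z * U (fst z) (snd z))"
    if "graphon M U" for U
    using graphon_measurable[OF that] graphon_nonneg[OF that] graphon_le_1[OF that] S T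
    by (intro MM.integrable_bounded_real[where B=1]) (auto simp: indicator_def)
  then have "(\<integral>z. indicator (S \<times> T) z * V (fst z) (snd z) \<partial>(M \<Otimes>\<^sub>M M))
        - (\<integral>z. indicator (S \<times> T) z * W (fst z) (snd z) \<partial>(M \<Otimes>\<^sub>M M))
      = (\<integral>z. indicator (S \<times> T) z * (V (fst z) (snd z) - W (fst z) (snd z)) \<partial>(M \<Otimes>\<^sub>M M))"
    using V W by (simp add: right_diff_distrib)
  also have "\<bar>\<dots>\<bar> \<le> cut_norm M (\<lambda>x y. V x y - W x y)"
  proof (rule abs_integral_Times_le_cut_norm[OF assms(1) _ _ S T, where B=1])
    show "(\<lambda>z. V (fst z) (snd z) - W (fst z) (snd z)) \<in> borel_measurable (M \<Otimes>\<^sub>M M)"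
      by measurable
    show "\<bar>V x y - W x y\<bar> \<le> 1" for x y
      using graphon_nonneg[OF V] graphon_le_1[OF V] graphon_nonneg[OF W] graphon_le_1[OF W]
      by (simp add: abs_le_iff) (meson add_increasing2 diff_le_eq le_diff_eq order_trans)
  qed
  finally show ?thesis .
qed

lemma fractional_vertex_cover_AE_Times_eq_0:
  assumes f: "fractional_vertex_cover M V f" and V: "graphon M V"
    and small: "\<And>x y. x \<in> S \<Longrightarrow> y \<in> T \<Longrightarrow> f x + f y < 1"
  shows "AE z in M \<Otimes>\<^sub>M M. indicator (S \<times> T) z * V (fst z) (snd z) = 0"
proof -
  have "AE z in M \<Otimes>\<^sub>M M. 0 < V (fst z) (snd z) \<longrightarrow> 1 \<le> f (fst z) + f (snd z)"
    using f unfolding fractional_vertex_cover_def by blast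
  then show ?thesis
  proof eventually_elim
    case (elim z)
    then show ?case
      using small[of "fst z" "snd z"] graphon_nonneg[OF V, of "fst z" "snd z"]
      by (cases "z \<in> S \<times> T") (auto simp: mem_Times_iff)
  qed
qed

text \<open>The cut norm controls the integrals of \<open>W\<^sub>n - W\<close> over the rectangles \<open>S\<^sub>n \<times> T\<^sub>n\<close>, while
  weak convergence of their indicators identifies the limit of the \<open>W\<close>-integrals.\<close>
lemma (in prob_space) AE_weak_limits_graphon_eq_0:
  assumes Ws: "\<And>n. graphon M (Ws n)" and W: "graphon M W"
    and cut: "(\<lambda>n. cut_norm M (\<lambda>x y. Ws n x y - W x y)) \<longlonglongrightarrow> 0"
    and S: "\<And>n. S n \<in> sets M" and T: "\<And>n. T n \<in> sets M"
    and vanish: "\<And>n. AE z in M \<Otimes>\<^sub>M M. indicator (S n \<times> T n) z * Ws n (fst z) (snd z) = 0"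
    and a: "weak_limit_of_indicators M S a" and b: "weak_limit_of_indicators M T b"
  shows "AE z in M \<Otimes>\<^sub>M M. a (fst z) * b (snd z) * W (fst z) (snd z) = 0"
proof -
  interpret MM: prob_space "M \<Otimes>\<^sub>M M" by (intro prob_space_pair prob_space_axioms)
  note [measurable] = graphon_measurable[OF W]
  note [measurable] = weak_limit_of_indicators_measurable[OF a] weak_limit_of_indicators_measurable[OF b]
  note ab_bounds = weak_limit_of_indicators_nonneg[OF a] weak_limit_of_indicators_le_1[OF a]
    weak_limit_of_indicators_nonneg[OF b] weak_limit_of_indicators_le_1[OF b]
  have "norm (\<integral>z. indicator (S n \<times> T n) z * W (fst z) (snd z) \<partial>(M \<Otimes>\<^sub>M M))
      \<le> cut_norm M (\<lambda>x y. Ws n x y - W x y)" for n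
    using abs_integral_Times_diff_le_cut_norm[OF prob_space_axioms Ws[of n] W S[of n] T[of n]]
      integral_eq_zero_AE[OF vanish[of n]]
    by simp
  then have "(\<lambda>n. \<integral>z. indicator (S n \<times> T n) z * W (fst z) (snd z) \<partial>(M \<Otimes>\<^sub>M M)) \<longlonglongrightarrow> 0"
    by (rule Lim_null_comparison[OF always_eventually[OF allI] cut])
  moreover have "(\<lambda>n. \<integral>z. indicator (S n \<times> T n) z * W (fst z) (snd z) \<partial>(M \<Otimes>\<^sub>M M))
      \<longlonglongrightarrow> (\<integral>z. a (fst z) * b (snd z) * W (fst z) (snd z) \<partial>(M \<Otimes>\<^sub>M M))"
    using graphon_nonneg[OF W] graphon_le_1[OF W]
    by (intro weak_limit_integral_Times[OF a b S T]) (simp_all add: abs_le_iff)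
  ultimately have integral_0: "(\<integral>z. a (fst z) * b (snd z) * W (fst z) (snd z) \<partial>(M \<Otimes>\<^sub>M M)) = 0"
    by (rule LIMSEQ_unique[symmetric])
  have nonneg: "0 \<le> a (fst z) * b (snd z) * W (fst z) (snd z)" for z
    using ab_bounds graphon_nonneg[OF W] by simp
  moreover have "a (fst z) * b (snd z) * W (fst z) (snd z) \<le> 1" for z
    using ab_bounds graphon_nonneg[OF W] graphon_le_1[OF W] by (simp add: mult_le_one)
  ultimately have "integrable (M \<Otimes>\<^sub>M M) (\<lambda>z. a (fst z) * b (snd z) * W (fst z) (snd z))"
    by (intro MM.integrable_bounded_real[where B=1]) auto
  then show ?thesis
    using integral_0 nonneg by (simp add: integral_nonneg_eq_0_iff_AE)
qed

section \<open>Rounding the weak limits to a half-integral cover\<close>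

lemma (in prob_space) L1_norm_half_integral:
  assumes f[measurable]: "f \<in> borel_measurable M" and half: "half_integral M f"
  shows "L1_norm M f = 1 - measure M (f -` {0} \<inter> space M) / 2 - measure M (f -` {0, 1/2} \<inter> space M) / 2"
proof -
  define Z where "Z = f -` {0} \<inter> space M"
  define K where "K = f -` {0, 1/2} \<inter> space M"
  have [measurable]: "Z \<in> sets M" "K \<in> sets M" unfolding Z_def K_def by measurable
  have "\<bar>f x\<bar> = 1 - indicator Z x / 2 - indicator K x / 2" if "x \<in> space M" for x
    using half that unfolding half_integral_def Z_def K_def by (auto simp: indicator_def)
  then have "L1_norm M f = (\<integral>x. 1 - indicator Z x / 2 - indicator K x / 2 \<partial>M)"
    unfolding L1_norm_def by (rule Bochner_Integration.integral_cong[OF refl])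
  also have "\<dots> = 1 - measure M Z / 2 - measure M K / 2"
  proof -
    have "integrable M (\<lambda>x. indicator A x / 2 :: real)" if [measurable]: "A \<in> sets M" for A
      by (rule integrable_bounded_real[where B=1]) (measurable, simp add: indicator_def)
    then have "integrable M (\<lambda>x. indicator Z x / 2 :: real)" "integrable M (\<lambda>x. indicator K x / 2 :: real)"
      by simp_all
    then show ?thesis by (simp add: prob_space Int_absorb2 sets.sets_into_space)
  qed
  finally show ?thesis unfolding Z_def K_def .
qed

definition rounded_cover :: "('a \<Rightarrow> real) \<Rightarrow> ('a \<Rightarrow> real) \<Rightarrow> 'a \<Rightarrow> real" where
  "rounded_cover p q x = (if 0 < p x then 0 else if 0 < q x then 1/2 else 1)"

lemma half_integral_rounded_cover: "half_integral M (rounded_cover p q)"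
  by (simp add: half_integral_def rounded_cover_def)

lemma fractional_vertex_cover_rounded_cover:
  assumes [measurable]: "p \<in> borel_measurable M" "q \<in> borel_measurable M"
    and nonneg: "\<And>x. 0 \<le> p x" "\<And>x. 0 \<le> q x"
    and pq: "AE z in M \<Otimes>\<^sub>M M. p (fst z) * q (snd z) * W (fst z) (snd z) = 0"
    and pp: "AE z in M \<Otimes>\<^sub>M M. p (fst z) * p (snd z) * W (fst z) (snd z) = 0"
    and qp: "AE z in M \<Otimes>\<^sub>M M. q (fst z) * p (snd z) * W (fst z) (snd z) = 0"
  shows "fractional_vertex_cover M W (rounded_cover p q)"
  unfolding fractional_vertex_cover_def
proof (intro conjI)
  show "rounded_cover p q \<in> borel_measurable M" unfolding rounded_cover_def by measurable
  show "\<forall>x\<in>space M. 0 \<le> rounded_cover p q x \<and> rounded_cover p q x \<le> 1"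
    by (simp add: rounded_cover_def)
  show "AE z in M \<Otimes>\<^sub>M M. 0 < W (fst z) (snd z) \<longrightarrow> 1 \<le> rounded_cover p q (fst z) + rounded_cover p q (snd z)"
    using pq pp qp
  proof eventually_elim
    case (elim z)
    show ?case
      using elim nonneg[of "fst z"] nonneg[of "snd z"]
      by (auto simp: rounded_cover_def less_le)
  qed
qed

lemma (in prob_space) integral_le_measure_rounded_cover_zero:
  assumes [measurable]: "p \<in> borel_measurable M" "q \<in> borel_measurable M"
    and p_bounds: "\<And>x. 0 \<le> p x" "\<And>x. p x \<le> 1"
  shows "(\<integral>x. p x \<partial>M) \<le> measure M (rounded_cover p q -` {0} \<inter> space M)"
proof -
  have zero_set: "rounded_cover p q -` {0} \<inter> space M = {x \<in> space M. 0 < p x}"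
    by (auto simp: rounded_cover_def split: if_splits)
  have "(\<integral>x. p x \<partial>M) \<le> (\<integral>x. indicator {x \<in> space M. 0 < p x} x \<partial>M)"
    using p_bounds
    by (intro integral_mono integrable_bounded_real[where B=1]) (auto simp: indicator_def less_le)
  then show ?thesis by (simp add: zero_set Int_absorb2)
qed

lemma (in prob_space) L1_norm_rounded_cover_le:
  assumes [measurable]: "p \<in> borel_measurable M" "q \<in> borel_measurable M"
    and bounds: "\<And>x. 0 \<le> p x" "\<And>x. p x \<le> 1" "\<And>x. 0 \<le> q x" "\<And>x. q x \<le> 1"
  shows "L1_norm M (rounded_cover p q) \<le> 1 - (\<integral>x. p x \<partial>M) / 2 - (\<integral>x. q x \<partial>M) / 2"
proof -
  have "integrable M p" "integrable M q"
    using bounds by (auto intro!: integrable_bounded_real[where B=1])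
  moreover have "rounded_cover p q \<in> borel_measurable M"
    unfolding rounded_cover_def by measurable
  then have "integrable M (\<lambda>x. \<bar>rounded_cover p q x\<bar>)"
    by (intro integrable_abs integrable_bounded_real[where B=1]) (auto simp: rounded_cover_def)
  moreover have "\<bar>rounded_cover p q x\<bar> \<le> 1 - p x / 2 - q x / 2" for x
    using bounds[of x] by (auto simp: rounded_cover_def)
  ultimately have "L1_norm M (rounded_cover p q) \<le> (\<integral>x. 1 - p x / 2 - q x / 2 \<partial>M)"
    unfolding L1_norm_def by (intro integral_mono) auto
  also have "\<dots> = 1 - (\<integral>x. p x \<partial>M) / 2 - (\<integral>x. q x \<partial>M) / 2"
    using \<open>integrable M p\<close> \<open>integrable M q\<close> by (simp add: prob_space)
  finally show ?thesis .
qed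

lemma (in prob_space) weak_limits_of_half_integral_covers:
  assumes Ws: "\<And>n. graphon M (Ws n)" and W: "graphon M W"
    and cut: "(\<lambda>n. cut_norm M (\<lambda>x y. Ws n x y - W x y)) \<longlonglongrightarrow> 0"
    and fs: "\<And>n. fractional_vertex_cover M (Ws n) (fs n) \<and> half_integral M (fs n)"
    and p: "weak_limit_of_indicators M (\<lambda>n. fs n -` {0} \<inter> space M) p"
    and q: "weak_limit_of_indicators M (\<lambda>n. fs n -` {0, 1/2} \<inter> space M) q"
  shows "fractional_vertex_cover M W (rounded_cover p q)"
    and "(\<lambda>n. measure M (fs n -` {0} \<inter> space M)) \<longlonglongrightarrow> (\<integral>x. p x \<partial>M)"
    and "(\<lambda>n. L1_norm M (fs n)) \<longlonglongrightarrow> 1 - (\<integral>x. p x \<partial>M) / 2 - (\<integral>x. q x \<partial>M) / 2"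
proof -
  have fs_measurable[measurable]: "fs n \<in> borel_measurable M" for n
    using fs unfolding fractional_vertex_cover_def by blast
  have level_sets: "fs n -` {0} \<inter> space M \<in> sets M" "fs n -` {0, 1/2} \<inter> space M \<in> sets M" for n
    by (measurable, measurable)
  note [measurable] = weak_limit_of_indicators_measurable[OF p] weak_limit_of_indicators_measurable[OF q]
  note pq_nonneg = weak_limit_of_indicators_nonneg[OF p] weak_limit_of_indicators_nonneg[OF q]
  have vanish: "AE z in M \<Otimes>\<^sub>M M. indicator (S \<times> T) z * Ws n (fst z) (snd z) = 0"
    if "\<And>x y. x \<in> S \<Longrightarrow> y \<in> T \<Longrightarrow> fs n x + fs n y < 1" for S T n
    using fractional_vertex_cover_AE_Times_eq_0 fs Ws that by blast
  show "fractional_vertex_cover M W (rounded_cover p q)"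
  proof (rule fractional_vertex_cover_rounded_cover[OF _ _ pq_nonneg])
    show "AE z in M \<Otimes>\<^sub>M M. p (fst z) * q (snd z) * W (fst z) (snd z) = 0"
      by (rule AE_weak_limits_graphon_eq_0[OF Ws W cut level_sets vanish p q]) auto
    show "AE z in M \<Otimes>\<^sub>M M. p (fst z) * p (snd z) * W (fst z) (snd z) = 0"
      by (rule AE_weak_limits_graphon_eq_0[OF Ws W cut level_sets(1) level_sets(1) vanish p p]) auto
    show "AE z in M \<Otimes>\<^sub>M M. q (fst z) * p (snd z) * W (fst z) (snd z) = 0"
      by (rule AE_weak_limits_graphon_eq_0[OF Ws W cut level_sets(2) level_sets(1) vanish q p]) auto
  qed measurable
  show zero_mass: "(\<lambda>n. measure M (fs n -` {0} \<inter> space M)) \<longlonglongrightarrow> (\<integral>x. p x \<partial>M)"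
    by (rule weak_limit_of_indicators_measure_tendsto[OF p]) blast
  have half_mass: "(\<lambda>n. measure M (fs n -` {0, 1/2} \<inter> space M)) \<longlonglongrightarrow> (\<integral>x. q x \<partial>M)"
    by (rule weak_limit_of_indicators_measure_tendsto[OF q]) blast
  have "L1_norm M (fs n) = 1 - measure M (fs n -` {0} \<inter> space M) / 2
      - measure M (fs n -` {0, 1/2} \<inter> space M) / 2" for n
    using L1_norm_half_integral[OF fs_measurable] fs by blast
  then show "(\<lambda>n. L1_norm M (fs n)) \<longlonglongrightarrow> 1 - (\<integral>x. p x \<partial>M) / 2 - (\<integral>x. q x \<partial>M) / 2"
    by (simp only:) (intro tendsto_diff tendsto_const tendsto_divide zero_mass half_mass, simp_all)
qed

theorem proposition4p2:
  fixes M :: "'a::polish_space measure"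
    and Ws :: "nat \<Rightarrow> 'a \<Rightarrow> 'a \<Rightarrow> real"
    and W :: "'a \<Rightarrow> 'a \<Rightarrow> real"
    and fs :: "nat \<Rightarrow> 'a \<Rightarrow> real"
  assumes "atomless_standard_prob_space M"
    and "\<And>n. graphon M (Ws n)"
    and "graphon M W"
    and "(\<lambda>n. cut_norm M (\<lambda>x y. Ws n x y - W x y)) \<longlonglongrightarrow> 0"
    and "\<And>n. fractional_vertex_cover M (Ws n) (fs n) \<and> half_integral M (fs n)"
  shows "\<exists>f. fractional_vertex_cover M W f \<and> half_integral M f \<and>
           ereal (measure M (f -` {0} \<inter> space M))
              \<ge> liminf (\<lambda>n. ereal (measure M (fs n -` {0} \<inter> space M))) \<and>
           ereal (L1_norm M f) \<le> liminf (\<lambda>n. ereal (L1_norm M (fs n)))"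
proof -
  interpret prob_space M using assms(1) by (simp add: atomless_standard_prob_space_def)
  obtain G where G: "countable G" "Int_stable G" "space M \<in> G" "G \<subseteq> Pow (space M)"
    "sets M = sigma_sets (space M) G"
    by (rule countable_Int_stable_generator[of M]) (use assms(1) in \<open>simp add: atomless_standard_prob_space_def\<close>)
  have [measurable]: "fs n \<in> borel_measurable M" for n
    using assms(5) unfolding fractional_vertex_cover_def by blast
  obtain \<sigma> where \<sigma>: "strict_mono \<sigma>"
    "(\<lambda>n. ereal (L1_norm M (fs (\<sigma> n)))) \<longlonglongrightarrow> liminf (\<lambda>n. ereal (L1_norm M (fs n)))"
    using liminf_subseq_lim[of "\<lambda>n. ereal (L1_norm M (fs n))"] by (auto simp: o_def)
  obtain r p q where r: "strict_mono r"
    and p: "weak_limit_of_indicators M ((\<lambda>n. fs (\<sigma> n) -` {0} \<inter> space M) \<circ> r) p"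
    and q: "weak_limit_of_indicators M ((\<lambda>n. fs (\<sigma> n) -` {0, 1/2} \<inter> space M) \<circ> r) q"
  proof (rule weak_limits_of_indicators_common_subseq[OF G])
    show "fs (\<sigma> n) -` {0} \<inter> space M \<in> sets M" "fs (\<sigma> n) -` {0, 1/2} \<inter> space M \<in> sets M" for n
      by (measurable, measurable)
  qed
  have \<psi>: "strict_mono (\<lambda>n. \<sigma> (r n))" using strict_mono_o[OF \<sigma>(1) r] by (simp add: o_def)
  have cut: "(\<lambda>n. cut_norm M (\<lambda>x y. Ws (\<sigma> (r n)) x y - W x y)) \<longlonglongrightarrow> 0"
    using LIMSEQ_subseq_LIMSEQ[OF assms(4) \<psi>] by (simp add: o_def)
  note limits = weak_limits_of_half_integral_covers[of "\<lambda>n. Ws (\<sigma> (r n))" W "\<lambda>n. fs (\<sigma> (r n))",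
      OF assms(2,3) cut assms(5) p[unfolded o_def] q[unfolded o_def]]
  note p_q = weak_limit_of_indicators_measurable[OF p] weak_limit_of_indicators_measurable[OF q]
    weak_limit_of_indicators_nonneg[OF p] weak_limit_of_indicators_le_1[OF p]
    weak_limit_of_indicators_nonneg[OF q] weak_limit_of_indicators_le_1[OF q]
  have zero_set: "liminf (\<lambda>n. ereal (measure M (fs n -` {0} \<inter> space M)))
      \<le> ereal (measure M (rounded_cover p q -` {0} \<inter> space M))"
    by (rule order_trans[OF liminf_ereal_le_of_subseq_tendsto[OF \<psi> limits(2)]])
      (use integral_le_measure_rounded_cover_zero[OF p_q(1-4)] in simp)
  have "ereal (L1_norm M (rounded_cover p q)) \<le> liminf (\<lambda>n. ereal (L1_norm M (fs n)))"
    using L1_norm_rounded_cover_le[OF p_q] liminf_ereal_eq_of_subseq_tendsto[OF \<sigma>(2) r limits(3)]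
    by simp
  then show ?thesis
    using limits(1) half_integral_rounded_cover zero_set by blast
qed

end
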